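(* For every integer $k\ge 2$, every finite graph $G$ with maximum degree $\Delta\ge 1$ has a star-$k$ coloring with at most $C_{2k-2}\,k^{\frac{1}{2k-2}}\,\Delta^{\frac{2k-1}{2k-2}}+\Delta$ colors, where $C_\ell=\ell\,(\ell-1)^{\frac1\ell-1}$.
   Context: A star-$k$ coloring of a graph is a proper vertex-coloring such that every path on $2k$ vertices contains at least three colors. *)

theory Defs
  imports Complex_Main
begin

definition finite_simple_graph :: "'a set \<Rightarrow> ('a \<Rightarrow> 'a \<Rightarrow> bool) \<Rightarrow> bool" where
  "finite_simple_graph V E \<longleftrightarrow> finite V \<and> (\<forall>u v. E u v \<longrightarrow> u \<in> V \<and> v \<in> V)
     \<and> (\<forall>u v. E u v \<longrightarrow> E v u) \<and> (\<forall>v. \<not> E v v)"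

definition degree :: "'a set \<Rightarrow> ('a \<Rightarrow> 'a \<Rightarrow> bool) \<Rightarrow> 'a \<Rightarrow> nat" where
  "degree V E v = card {u \<in> V. E v u}"

definition max_degree :: "'a set \<Rightarrow> ('a \<Rightarrow> 'a \<Rightarrow> bool) \<Rightarrow> nat" where
  "max_degree V E = Max (degree V E ` V)"

definition is_path :: "'a set \<Rightarrow> ('a \<Rightarrow> 'a \<Rightarrow> bool) \<Rightarrow> 'a list \<Rightarrow> bool" where
  "is_path V E p \<longleftrightarrow> p \<noteq> [] \<and> set p \<subseteq> V \<and> distinct p
     \<and> (\<forall>i. Suc i < length p \<longrightarrow> E (p ! i) (p ! Suc i))"

definition proper_coloring :: "'a set \<Rightarrow> ('a \<Rightarrow> 'a \<Rightarrow> bool) \<Rightarrow> ('a \<Rightarrow> 'c) \<Rightarrow> bool" where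
  "proper_coloring V E c \<longleftrightarrow> (\<forall>u\<in>V. \<forall>v\<in>V. E u v \<longrightarrow> c u \<noteq> c v)"

definition star_k_coloring :: "nat \<Rightarrow> 'a set \<Rightarrow> ('a \<Rightarrow> 'a \<Rightarrow> bool) \<Rightarrow> ('a \<Rightarrow> 'c) \<Rightarrow> bool" where
  "star_k_coloring k V E c \<longleftrightarrow> proper_coloring V E c \<and>
     (\<forall>p. is_path V E p \<and> length p = 2 * k \<longrightarrow> card (c ` set p) \<ge> 3)"

definition C_const :: "nat \<Rightarrow> real" where
  "C_const l = real l * (real l - 1) powr (1 / real l - 1)"

end

theory Submission
  imports Defs
begin

text \<open>
  The proof is a counting argument in the style of Rosenfeld. Let C(U) be the set of
  star-k colourings of the subgraph induced by U with L colours. By induction on the size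
  of U one shows that \<beta> |C(U)| \<le> |C(U \<union> {v})| for every vertex v outside U. Extending a
  colouring of U by a colour for v that avoids the at most \<Delta> colours on its neighbours
  gives at least (L - \<Delta>) |C(U)| proper colourings of U \<union> {v}. Each one that is not
  star-k has a 2-coloured path on 2k vertices through v, and is determined by that path
  together with its restriction to U \<union> {v} minus 2k - 2 path vertices including v; by
  induction there are at most |C(U)| / \<beta>^(2k-3) such restrictions, and there are at most
  k \<Delta> (\<Delta> - 1)^(2k-2) such paths. So C(V) is nonempty as soon as
  \<beta> + k \<Delta> (\<Delta> - 1)^(2k-2) / \<beta>^(2k-3) \<le> L - \<Delta>, and the optimal choice of \<beta> yields the
  bound of the theorem.
\<close>

section \<open>The numerical bound\<close>

definition star_bound :: "nat \<Rightarrow> nat \<Rightarrow> real" where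
  "star_bound k D = C_const (2*k-2) * real k powr (1 / real (2*k-2))
     * real D powr (real (2*k-1) / real (2*k-2))"

lemma C_const_ge_one:
  assumes "l \<ge> 2"
  shows "1 \<le> C_const l"
proof -
  have l1: "real l - 1 \<ge> 1" using assms by simp
  have "1 / (real l - 1) = (real l - 1) powr (-1)"
    using l1 by (simp add: powr_minus_divide)
  also have "\<dots> \<le> (real l - 1) powr (1 / real l - 1)"
    using l1 by (intro powr_mono) auto
  finally have "real l * (1 / (real l - 1)) \<le> C_const l"
    unfolding C_const_def by (intro mult_left_mono) auto
  moreover have "1 \<le> real l * (1 / (real l - 1))" using l1 by (simp add: field_simps)
  ultimately show ?thesis by linarith
qed

lemma C_const_power:
  assumes "l \<ge> 2"
  shows "C_const l ^ l = real l ^ l / (real l - 1) ^ (l - 1)"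
proof -
  have l1: "real l - 1 > 0" using assms by simp
  have "real l * (1 / real l - 1) = - real (l - 1)" using assms by (simp add: of_nat_diff field_simps)
  then have "((real l - 1) powr (1 / real l - 1)) ^ l = (real l - 1) powr (- real (l - 1))"
    using l1 by (simp add: powr_power)
  also have "\<dots> = 1 / (real l - 1) ^ (l - 1)"
    by (simp only: powr_minus_divide powr_realpow[OF l1])
  finally show ?thesis unfolding C_const_def power_mult_distrib by simp
qed

lemma star_bound_ge_degree:
  assumes "k \<ge> 2" "D \<ge> 1"
  shows "real D \<le> star_bound k D"
proof -
  have "1 \<le> C_const (2*k-2)" using assms by (intro C_const_ge_one) simp
  moreover have "1 \<le> real k powr (1 / real (2*k-2))" using assms by (intro ge_one_powr_ge_zero) auto
  moreover have "real D powr 1 \<le> real D powr (real (2*k-1) / real (2*k-2))"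
    using assms by (intro powr_mono) (auto simp: of_nat_diff)
  ultimately have "1 * 1 * real D \<le> star_bound k D"
    unfolding star_bound_def using assms by (intro mult_mono) auto
  then show ?thesis by simp
qed

lemma star_bound_power:
  assumes "k \<ge> 2" "D \<ge> 1"
  shows "star_bound k D ^ (2*k-2)
    = real (2*k-2) ^ (2*k-2) / real (2*k-3) ^ (2*k-3) * real k * real D ^ (2*k-1)"
proof -
  have "(real k powr (1 / real (2*k-2))) ^ (2*k-2) = real k"
    using assms by (simp add: powr_power)
  moreover have "real (2*k-2) * (real (2*k-1) / real (2*k-2)) = real (2*k-1)" using assms by simp
  then have "(real D powr (real (2*k-1) / real (2*k-2))) ^ (2*k-2) = real D ^ (2*k-1)"
    using assms by (simp add: powr_power powr_realpow del: of_nat_diff)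
  moreover have "C_const (2*k-2) ^ (2*k-2) = real (2*k-2) ^ (2*k-2) / real (2*k-3) ^ (2*k-3)"
    using assms C_const_power[of "2*k-2"] by (simp add: of_nat_diff numeral_eq_Suc)
  ultimately show ?thesis unfolding star_bound_def power_mult_distrib by simp
qed

lemma exists_pos_add_div_power_le:
  fixes A x :: real and m :: nat
  assumes "m > 0" "x > 0" "A * real (Suc m) ^ Suc m \<le> real m ^ m * x ^ Suc m"
  shows "\<exists>\<beta>>0. \<beta> + A / \<beta> ^ m \<le> x"
proof -
  define \<beta> where "\<beta> = real m * x / real (Suc m)"
  have \<beta>: "\<beta> > 0" using assms by (simp add: \<beta>_def)
  have "A \<le> \<beta> ^ m * (x / real (Suc m))"
    using assms(3) unfolding \<beta>_def power_divide power_mult_distrib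
    by (simp add: field_simps del: of_nat_Suc)
  then have "A / \<beta> ^ m \<le> x / real (Suc m)" using \<beta> by (simp add: field_simps)
  moreover have "\<beta> + x / real (Suc m) = (real m + 1) * x / real (Suc m)"
    unfolding \<beta>_def by (simp add: add_divide_distrib algebra_simps)
  then have "\<beta> + x / real (Suc m) = x" by (simp add: add.commute)
  ultimately show ?thesis using \<beta> by (intro exI[of _ \<beta>]) auto
qed

text \<open>With y = F (D - 1) / D the hypothesis of the previous lemma holds with equality, and
  y = F - F / D \<le> F - 1 \<le> \<lfloor>F\<rfloor> because F \<ge> D.\<close>
lemma exists_beta_below_star_bound:
  assumes k: "k \<ge> 2" and D: "D \<ge> 1"
  shows "\<exists>\<beta>>0. \<beta> + real (k * D * (D - 1) ^ (2*k-2)) / \<beta> ^ (2*k-3) \<le> of_int \<lfloor>star_bound k D\<rfloor>"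
proof -
  define F where "F = star_bound k D"
  define m where "m = 2*k-3"
  have m: "m > 0" "2*k-2 = Suc m" "2*k-1 = Suc (Suc m)" using k by (auto simp: m_def)
  have FD: "real D \<le> F" unfolding F_def by (rule star_bound_ge_degree[OF k D])
  have F_power: "F ^ Suc m = real (Suc m) ^ Suc m / real m ^ m * real k * real D ^ Suc (Suc m)"
    using star_bound_power[OF k D] unfolding F_def m_def m(2,3)[unfolded m_def] .
  define y where "y = F * (real D - 1) / real D"
  have "y = F - F / real D" using D by (simp add: y_def field_simps)
  also have "\<dots> \<le> F - 1" using FD D by (simp add: field_simps)
  also have "\<dots> \<le> of_int \<lfloor>F\<rfloor>" by linarith
  finally have y_floor: "y \<le> of_int \<lfloor>F\<rfloor>" .
  have y: "0 \<le> y" using FD D by (simp add: y_def)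
  have "real (k * D * (D - 1) ^ Suc m) * real (Suc m) ^ Suc m
      = real m ^ m * (F ^ Suc m * ((real D - 1) / real D) ^ Suc m)"
    using D m(1) unfolding F_power by (simp add: of_nat_diff power_divide field_simps)
  also have "\<dots> = real m ^ m * y ^ Suc m" by (simp add: y_def power_mult_distrib power_divide)
  also have "\<dots> \<le> real m ^ m * of_int \<lfloor>F\<rfloor> ^ Suc m"
    using y y_floor by (intro mult_left_mono power_mono) auto
  finally have "real (k * D * (D - 1) ^ Suc m) * real (Suc m) ^ Suc m \<le> real m ^ m * of_int \<lfloor>F\<rfloor> ^ Suc m" .
  moreover have "of_int \<lfloor>F\<rfloor> > (0::real)" using FD D by linarith
  ultimately show ?thesis
    using exists_pos_add_div_power_le[OF m(1)] unfolding F_def m(2) m_def by blast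
qed

section \<open>Counting paths in graphs of bounded degree\<close>

lemma card_Sigma_le:
  assumes "finite A" "\<And>a. a \<in> A \<Longrightarrow> finite (B a) \<and> card (B a) \<le> b"
  shows "card (Sigma A B) \<le> card A * b"
proof -
  have "card (Sigma A B) = (\<Sum>a\<in>A. card (B a))" using assms by simp
  also have "\<dots> \<le> card A * b" using assms(2) sum_bounded_above[of A "\<lambda>a. card (B a)" b] by simp
  finally show ?thesis .
qed

lemma is_path_iff_successively:
  "is_path V E p \<longleftrightarrow> p \<noteq> [] \<and> set p \<subseteq> V \<and> distinct p \<and> successively E p"
  unfolding is_path_def successively_conv_nth by auto

lemma is_path_mono: "is_path U E p \<Longrightarrow> U \<subseteq> X \<Longrightarrow> is_path X E p"
  unfolding is_path_def by auto

lemma finite_simple_graph_converse: "finite_simple_graph V E \<Longrightarrow> (\<lambda>x y. E y x) = E"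
  unfolding finite_simple_graph_def by (intro ext) blast

lemma successively_rev_graph:
  assumes "finite_simple_graph V E"
  shows "successively E (rev p) \<longleftrightarrow> successively E p"
proof -
  have "successively E (rev p) \<longleftrightarrow> successively (\<lambda>x y. E y x) p" by simp
  also have "\<dots> \<longleftrightarrow> successively E p" by (simp only: finite_simple_graph_converse[OF assms])
  finally show ?thesis .
qed

lemma is_path_rev: "finite_simple_graph V E \<Longrightarrow> is_path U E p \<Longrightarrow> is_path U E (rev p)"
  by (simp add: is_path_iff_successively successively_rev_graph del: successively_rev)

lemma proper_coloring_path_step:
  assumes "proper_coloring U E c" "is_path U E p" "Suc i < length p"
  shows "c (p ! i) \<noteq> c (p ! Suc i)"
proof -
  have "p ! i \<in> U" "p ! Suc i \<in> U" "E (p ! i) (p ! Suc i)"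
    using assms(2,3) nth_mem[of i p] nth_mem[of "Suc i" p] unfolding is_path_def by auto
  then show ?thesis using assms(1) unfolding proper_coloring_def by blast
qed

lemma mem_if_nth_first_half:
  assumes "length p = 2 * k" "j < k" "p ! j = v"
  shows "v \<in> set p"
  using assms nth_mem[of j p] by simp

fun non_backtracking :: "('a \<Rightarrow> 'a \<Rightarrow> bool) \<Rightarrow> 'a \<Rightarrow> 'a \<Rightarrow> 'a list \<Rightarrow> bool" where
  "non_backtracking E a b [] = True"
| "non_backtracking E a b (c # q) = (E b c \<and> c \<noteq> a \<and> non_backtracking E b c q)"

lemma non_backtracking_Suc_eq:
  "{q. length q = Suc r \<and> non_backtracking E a b q}
     = (\<lambda>(c, q). c # q) ` (SIGMA c:{c. E b c \<and> c \<noteq> a}. {q. length q = r \<and> non_backtracking E b c q})"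
  by (auto simp: length_Suc_conv)

lemma non_backtracking_if_distinct:
  "distinct (a # b # q) \<Longrightarrow> successively E (b # q) \<Longrightarrow> non_backtracking E a b q"
  by (induction q arbitrary: a b) (auto simp: successively_Cons)

lemma card_non_backtracking_Suc_le:
  assumes "finite {c. E b c \<and> c \<noteq> a} \<and> card {c. E b c \<and> c \<noteq> a} \<le> M"
    and "\<And>c. E b c \<Longrightarrow> finite {q. length q = r \<and> non_backtracking E b c q}
      \<and> card {q. length q = r \<and> non_backtracking E b c q} \<le> T"
  shows "finite {q. length q = Suc r \<and> non_backtracking E a b q}
    \<and> card {q. length q = Suc r \<and> non_backtracking E a b q} \<le> M * T"
proof -
  define N where "N = {c. E b c \<and> c \<noteq> a}"
  define S where "S = (SIGMA c:N. {q. length q = r \<and> non_backtracking E b c q})"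
  have N: "finite N" "card N \<le> M" using assms(1) unfolding N_def by auto
  have tails: "finite {q. length q = r \<and> non_backtracking E b c q}
      \<and> card {q. length q = r \<and> non_backtracking E b c q} \<le> T" if "c \<in> N" for c
    using assms(2) that unfolding N_def by blast
  have "finite S" using N(1) tails unfolding S_def by blast
  moreover have "card S \<le> card N * T" unfolding S_def by (rule card_Sigma_le[OF N(1) tails])
  then have "card S \<le> M * T" using N(2) by (meson le_trans mult_le_mono1)
  ultimately show ?thesis
    unfolding non_backtracking_Suc_eq N_def[symmetric] S_def[symmetric] using card_image_le le_trans by blast
qed

locale degree_bounded_graph =
  fixes V :: "'a set" and E :: "'a \<Rightarrow> 'a \<Rightarrow> bool" and D :: nat
  assumes graph: "finite_simple_graph V E"
    and degree_le: "\<And>v. v \<in> V \<Longrightarrow> degree V E v \<le> D"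
begin

lemma finite_vertices: "finite V"
  using graph unfolding finite_simple_graph_def by simp

lemma edge_sym: "E u v \<Longrightarrow> E v u"
  and edge_irrefl: "\<not> E v v"
  and edge_in_vertices: "E u v \<Longrightarrow> u \<in> V"
  using graph unfolding finite_simple_graph_def by blast+

lemma neighbours_finite_card:
  assumes "v \<in> V"
  shows "finite {u. E v u} \<and> card {u. E v u} \<le> D"
proof -
  have "{u. E v u} = {u \<in> V. E v u}" using edge_sym edge_in_vertices by blast
  then show ?thesis using assms degree_le[of v] finite_vertices unfolding degree_def by simp
qed

lemma card_non_backtracking_adjacent:
  assumes "E a b"
  shows "finite {q. length q = r \<and> non_backtracking E a b q}
    \<and> card {q. length q = r \<and> non_backtracking E a b q} \<le> (D - 1) ^ r"
  using assms
proof (induction r arbitrary: a b)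
  case 0
  have "{q. length q = 0 \<and> non_backtracking E a b q} = {[]}" by auto
  then show ?case by simp
next
  case (Suc r)
  have "{c. E b c \<and> c \<noteq> a} = {c. E b c} - {a}" by auto
  then have "finite {c. E b c \<and> c \<noteq> a} \<and> card {c. E b c \<and> c \<noteq> a} \<le> D - 1"
    using neighbours_finite_card[of b] edge_sym[OF Suc.prems] edge_in_vertices
    by (auto simp: card_Diff_singleton)
  from card_non_backtracking_Suc_le[OF this Suc.IH] show ?case by simp
qed

lemma card_non_backtracking_from:
  assumes "v \<in> V"
  shows "finite {q. length q = Suc r \<and> non_backtracking E v v q}
    \<and> card {q. length q = Suc r \<and> non_backtracking E v v q} \<le> D * (D - 1) ^ r"
proof -
  have "{c. E v c \<and> c \<noteq> v} = {c. E v c}" using edge_irrefl by auto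
  then have "finite {c. E v c \<and> c \<noteq> v} \<and> card {c. E v c \<and> c \<noteq> v} \<le> D"
    using neighbours_finite_card[OF assms] by simp
  then show ?thesis by (rule card_non_backtracking_Suc_le[OF _ card_non_backtracking_adjacent])
qed

lemma path_halves_non_backtracking:
  assumes "is_path V E p" "Suc j < length p"
  shows "non_backtracking E (p ! j) (p ! j) (drop (Suc j) p)"
    and "non_backtracking E (p ! Suc j) (p ! j) (rev (take j p))"
proof -
  define xs where "xs = take j p"
  define q where "q = drop (Suc (Suc j)) p"
  have tail: "drop (Suc j) p = p ! Suc j # q"
    using assms(2) unfolding q_def by (simp add: Cons_nth_drop_Suc)
  have p_eq: "p = xs @ p ! j # p ! Suc j # q"
    using assms(2) id_take_nth_drop[of j p] unfolding xs_def tail[symmetric] by simp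
  have "distinct p" "successively E p" using assms(1) unfolding is_path_iff_successively by auto
  then have d: "distinct (xs @ p ! j # p ! Suc j # q)" and s: "successively E (xs @ p ! j # p ! Suc j # q)"
    using p_eq by metis+
  from d have "distinct (p ! j # p ! Suc j # q)" "p ! Suc j \<noteq> p ! j" by auto
  moreover have "successively E (p ! Suc j # q)" "E (p ! j) (p ! Suc j)"
    using s by (simp_all add: successively_append_iff)
  ultimately show "non_backtracking E (p ! j) (p ! j) (drop (Suc j) p)"
    unfolding tail by (simp add: non_backtracking_if_distinct)
  from d have "distinct (p ! Suc j # p ! j # rev xs)" by auto
  moreover have "successively E (xs @ [p ! j])"
    using s by (simp add: successively_append_iff)
  then have "successively E (p ! j # rev xs)"
    using successively_rev_graph[OF graph, of "xs @ [p ! j]"] by simp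
  ultimately show "non_backtracking E (p ! Suc j) (p ! j) (rev (take j p))"
    unfolding xs_def[symmetric] by (rule non_backtracking_if_distinct)
qed

text \<open>A path with v at position j splits into the walk from v to its end and the
  reversed walk from v back to its start; both are non-backtracking.\<close>
lemma card_paths_with_vertex_at:
  assumes v: "v \<in> V" and j: "Suc j < n"
  shows "card {p. is_path V E p \<and> length p = n \<and> p ! j = v} \<le> D * (D - 1) ^ (n - 2)"
proof -
  define P where "P = {p. is_path V E p \<and> length p = n \<and> p ! j = v}"
  define S where "S = {ys. length ys = Suc (n - 2 - j) \<and> non_backtracking E v v ys}"
  define B where "B ys = {zs. length zs = j \<and> non_backtracking E (hd ys) v zs}" for ys
  define h where "h p = (drop (Suc j) p, rev (take j p))" for p :: "'a list"
  have S: "finite S \<and> card S \<le> D * (D - 1) ^ (n - 2 - j)"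
    unfolding S_def by (rule card_non_backtracking_from[OF v])
  have B: "finite (B ys) \<and> card (B ys) \<le> (D - 1) ^ j" if "ys \<in> S" for ys
  proof -
    have "E (hd ys) v" using that edge_sym unfolding S_def by (cases ys) auto
    then show ?thesis unfolding B_def by (rule card_non_backtracking_adjacent)
  qed
  have "inj_on h P"
  proof (rule inj_onI)
    fix p p' assume "p \<in> P" "p' \<in> P" "h p = h p'"
    then have halves: "take j p = take j p'" "p ! j = p' ! j" "drop (Suc j) p = drop (Suc j) p'"
      and "j < length p" "j < length p'"
      using j unfolding P_def h_def by auto
    have "p = take j p @ p ! j # drop (Suc j) p" using \<open>j < length p\<close> by (rule id_take_nth_drop)
    also have "\<dots> = take j p' @ p' ! j # drop (Suc j) p'" unfolding halves ..
    also have "\<dots> = p'" using \<open>j < length p'\<close> by (rule id_take_nth_drop[symmetric])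
    finally show "p = p'" .
  qed
  moreover have "h ` P \<subseteq> Sigma S B"
  proof (rule image_subsetI)
    fix p assume "p \<in> P"
    then have p: "is_path V E p" "length p = n" "p ! j = v" unfolding P_def by auto
    have j_p: "Suc j < length p" using p(2) j by simp
    then have "drop (Suc j) p \<in> S" "hd (drop (Suc j) p) = p ! Suc j"
      using path_halves_non_backtracking(1)[OF p(1) j_p] p j by (simp_all add: S_def hd_drop_conv_nth)
    moreover have "rev (take j p) \<in> B (drop (Suc j) p)"
      using path_halves_non_backtracking(2)[OF p(1) j_p] p(3) calculation(2) j p(2)
      by (simp add: B_def)
    ultimately show "h p \<in> Sigma S B" by (simp add: h_def)
  qed
  ultimately have "card P \<le> card (Sigma S B)"
    using card_inj_on_le S B by (metis finite_SigmaI)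
  also have "\<dots> \<le> card S * (D - 1) ^ j" using card_Sigma_le[of S B] S B by blast
  also have "\<dots> \<le> D * (D - 1) ^ (n - 2 - j) * (D - 1) ^ j" using S by simp
  also have "\<dots> = D * (D - 1) ^ (n - 2)" using j by (simp flip: power_add)
  finally show ?thesis unfolding P_def .
qed

lemma finite_paths_length: "finite {p. is_path V E p \<and> length p = n}"
  by (rule finite_subset[OF _ finite_lists_length_eq[OF finite_vertices, of n]]) (auto simp: is_path_def)

lemma paths_through_first_half:
  assumes "W \<subseteq> V" "v \<in> V"
  shows "finite {p. is_path W E p \<and> length p = 2 * k \<and> (\<exists>j<k. p ! j = v)}"
    "card {p. is_path W E p \<and> length p = 2 * k \<and> (\<exists>j<k. p ! j = v)} \<le> k * D * (D - 1) ^ (2 * k - 2)"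
proof -
  define P where "P = {p. is_path W E p \<and> length p = 2 * k \<and> (\<exists>j<k. p ! j = v)}"
  define Q where "Q j = {p. is_path V E p \<and> length p = 2 * k \<and> p ! j = v}" for j
  have sub: "P \<subseteq> (\<Union>j<k. Q j)" using is_path_mono[OF _ assms(1)] unfolding P_def Q_def by blast
  have "finite (Q j)" for j
    by (rule finite_subset[OF _ finite_paths_length[of "2 * k"]]) (auto simp: Q_def)
  then have fin: "finite (\<Union>j<k. Q j)" by simp
  then show "finite {p. is_path W E p \<and> length p = 2 * k \<and> (\<exists>j<k. p ! j = v)}"
    using finite_subset[OF sub] unfolding P_def by blast
  have "card P \<le> card (\<Union>j<k. Q j)" by (rule card_mono[OF fin sub])
  also have "\<dots> \<le> (\<Sum>j<k. card (Q j))" by (rule card_UN_le) simp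
  also have "\<dots> \<le> (\<Sum>j<k. D * (D - 1) ^ (2 * k - 2))"
    unfolding Q_def using card_paths_with_vertex_at[OF assms(2)] by (intro sum_mono) simp
  finally show "card {p. is_path W E p \<and> length p = 2 * k \<and> (\<exists>j<k. p ! j = v)}
      \<le> k * D * (D - 1) ^ (2 * k - 2)"
    unfolding P_def by simp
qed

end

section \<open>Two-coloured paths\<close>

lemma two_colours_alternate:
  assumes steps: "\<And>i. Suc i < length p \<Longrightarrow> f (p ! i) \<noteq> f (p ! Suc i)"
    and two: "card (f ` set p) \<le> 2" and "i < length p"
  shows "f (p ! i) = f (p ! (i mod 2))"
  using \<open>i < length p\<close>
proof (induction i rule: less_induct)
  case (less i)
  show ?case
  proof (cases "i < 2")
    case False
    then obtain i' where i: "i = Suc (Suc i')" by (metis add_2_eq_Suc le_Suc_ex not_less)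
    have "f (p ! i) = f (p ! i')"
    proof (rule ccontr)
      assume "f (p ! i) \<noteq> f (p ! i')"
      moreover have "f (p ! i) \<noteq> f (p ! Suc i')" "f (p ! i') \<noteq> f (p ! Suc i')"
        using steps[of i'] steps[of "Suc i'"] less.prems i by auto
      ultimately have "card {f (p ! i), f (p ! i'), f (p ! Suc i')} = 3" by simp
      moreover have "{f (p ! i), f (p ! i'), f (p ! Suc i')} \<subseteq> f ` set p"
        using less.prems i by auto
      ultimately have "3 \<le> card (f ` set p)" by (metis card_mono finite_imageI finite_set)
      then show False using two by simp
    qed
    also have "\<dots> = f (p ! (i' mod 2))" using less.IH[of i'] less.prems i by simp
    finally show ?thesis using i by simp
  qed simp
qed

definition recolour_path :: "'a list \<Rightarrow> nat \<Rightarrow> ('a \<Rightarrow> 'c) \<Rightarrow> 'a \<Rightarrow> 'c" where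
  "recolour_path p e \<psi> x =
     (if x \<in> set p then \<psi> (p ! (if \<exists>i<length p. even i \<and> p ! i = x then e else Suc e)) else \<psi> x)"

lemma recolour_two_coloured_path:
  assumes "distinct p" "even e" "Suc e < length p"
    and "\<And>i. Suc i < length p \<Longrightarrow> \<phi> (p ! i) \<noteq> \<phi> (p ! Suc i)" "card (\<phi> ` set p) \<le> 2"
    and agree: "\<And>x. x \<notin> set p \<or> x = p ! e \<or> x = p ! Suc e \<Longrightarrow> \<psi> x = \<phi> x"
  shows "recolour_path p e \<psi> = \<phi>"
proof
  fix x
  have alt: "\<phi> (p ! i) = \<phi> (p ! (i mod 2))" if "i < length p" for i
    by (rule two_colours_alternate[OF assms(4,5) that])
  show "recolour_path p e \<psi> x = \<phi> x"
  proof (cases "x \<in> set p")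
    case True
    then obtain i where i: "i < length p" "x = p ! i" by (auto simp: in_set_conv_nth)
    have parity: "(\<exists>i'<length p. even i' \<and> p ! i' = x) \<longleftrightarrow> even i"
    proof
      assume "\<exists>i'<length p. even i' \<and> p ! i' = x"
      then obtain i' where "i' < length p" "even i'" "p ! i' = p ! i" using i(2) by blast
      then show "even i" using nth_eq_iff_index_eq[OF assms(1) _ i(1)] by simp
    qed (use i in blast)
    have recolour_x: "recolour_path p e \<psi> x = \<psi> (p ! (if even i then e else Suc e))"
      using True unfolding recolour_path_def parity by simp
    have "e mod 2 = 0" "Suc e mod 2 = 1" using assms(2) by presburger+
    then have "\<phi> (p ! e) = \<phi> (p ! 0)" "\<phi> (p ! Suc e) = \<phi> (p ! 1)"
      using alt[of e] alt[of "Suc e"] assms(3) by simp_all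
    moreover have "\<psi> (p ! e) = \<phi> (p ! e)" "\<psi> (p ! Suc e) = \<phi> (p ! Suc e)"
      by (simp_all add: agree)
    moreover have "\<phi> x = \<phi> (p ! (i mod 2))" using alt[OF i(1)] i(2) by simp
    ultimately show ?thesis
      unfolding recolour_x by (cases "even i") (simp_all add: even_iff_mod_2_eq_zero odd_iff_mod_2_eq_one)
  qed (simp add: recolour_path_def agree)
qed

text \<open>For a path through v, the positions anchor v p and Suc (anchor v p) start at an even
  index and carry vertices other than v.\<close>
definition anchor :: "'a \<Rightarrow> 'a list \<Rightarrow> nat" where
  "anchor v p = (if v = p ! 0 \<or> v = p ! 1 then length p - 2 else 0)"

definition forgotten :: "'a \<Rightarrow> 'a list \<Rightarrow> 'a set" where
  "forgotten v p = set p - {p ! anchor v p, p ! Suc (anchor v p)}"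

lemma anchor_forgotten:
  assumes "distinct p" "length p = 2 * k" "k \<ge> 2" "v \<in> set p"
  shows "even (anchor v p)" "Suc (anchor v p) < length p" "v \<in> forgotten v p"
    "card (forgotten v p) = 2 * k - 2"
proof -
  show "even (anchor v p)" "Suc (anchor v p) < length p"
    using assms(2,3) unfolding anchor_def by auto
  have "v \<noteq> p ! anchor v p \<and> v \<noteq> p ! Suc (anchor v p)"
  proof (cases "v = p ! 0 \<or> v = p ! 1")
    case True
    then obtain i where i: "i < 2" "v = p ! i" by (metis one_less_numeral_iff pos2 semiring_norm(76))
    have "anchor v p = length p - 2" using True by (simp add: anchor_def)
    moreover have "i \<noteq> length p - 2" "i \<noteq> Suc (length p - 2)" "Suc (length p - 2) < length p"
      using i assms(2,3) by auto
    ultimately show ?thesis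
      using i assms(1) nth_eq_iff_index_eq[OF assms(1)] by auto
  next
    case False
    then show ?thesis by (simp add: anchor_def)
  qed
  then show "v \<in> forgotten v p" using assms(4) by (simp add: forgotten_def)
  have "p ! anchor v p \<noteq> p ! Suc (anchor v p)"
    using assms \<open>Suc (anchor v p) < length p\<close> by (simp add: nth_eq_iff_index_eq)
  moreover have "{p ! anchor v p, p ! Suc (anchor v p)} \<subseteq> set p"
    using \<open>Suc (anchor v p) < length p\<close> by simp
  ultimately have "card (forgotten v p) = card (set p) - 2"
    unfolding forgotten_def by (subst card_Diff_subset) auto
  then show "card (forgotten v p) = 2 * k - 2"
    using distinct_card[OF assms(1)] assms(2) by simp
qed

section \<open>Counting star colourings\<close>

locale star_colouring_count = degree_bounded_graph +
  fixes k L :: nat and \<beta> :: real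
  assumes k_ge_2: "k \<ge> 2" and beta_pos: "\<beta> > 0"
    and budget: "\<beta> + real (k * D * (D - 1) ^ (2 * k - 2)) / \<beta> ^ (2 * k - 3) \<le> real L - real D"
begin

text \<open>Colourings are normalised to 0 outside U, so that they form a finite set and a
  colouring of U is determined by its values on U.\<close>
definition colourings :: "'a set \<Rightarrow> ('a \<Rightarrow> nat) set" where
  "colourings U = {c. (\<forall>x\<in>U. c x < L) \<and> (\<forall>x. x \<notin> U \<longrightarrow> c x = 0) \<and> star_k_coloring k U E c}"

lemma finite_colourings: "finite U \<Longrightarrow> finite (colourings U)"
  by (rule finite_subset[OF _ finite_set_of_finite_funs[of U "{..<L}" 0]])
     (auto simp: colourings_def)

lemma card_colourings_empty: "card (colourings {}) = 1"
proof -
  have "star_k_coloring k {} E c" for c :: "'a \<Rightarrow> nat"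
    unfolding star_k_coloring_def proper_coloring_def is_path_def by simp
  then have "colourings {} = {\<lambda>_. 0}" unfolding colourings_def by (auto intro!: ext)
  then show ?thesis by simp
qed

lemma restrict_colouring:
  assumes c: "c \<in> colourings U" and "X \<subseteq> U"
  shows "(\<lambda>x. if x \<in> X then c x else 0) \<in> colourings X"
proof -
  let ?c = "\<lambda>x. if x \<in> X then c x else 0"
  have "proper_coloring X E ?c"
    using c \<open>X \<subseteq> U\<close> unfolding colourings_def star_k_coloring_def proper_coloring_def
    by (auto simp: subset_iff)
  moreover have "card (?c ` set p) \<ge> 3" if p: "is_path X E p" "length p = 2 * k" for p
  proof -
    have "?c ` set p = c ` set p" using p(1) unfolding is_path_def by auto
    moreover have "is_path U E p" using is_path_mono[OF p(1) \<open>X \<subseteq> U\<close>] .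
    ultimately show ?thesis using c p(2) unfolding colourings_def star_k_coloring_def by auto
  qed
  ultimately show ?thesis using c \<open>X \<subseteq> U\<close> unfolding colourings_def star_k_coloring_def by auto
qed

definition grows_below :: "nat \<Rightarrow> bool" where
  "grows_below n \<longleftrightarrow> (\<forall>U w. U \<subseteq> V \<longrightarrow> card U < n \<longrightarrow> w \<in> V - U
     \<longrightarrow> \<beta> * card (colourings U) \<le> card (colourings (insert w U)))"

lemma card_colourings_diff_ge:
  assumes grow: "grows_below (card U)"
    and U: "U \<subseteq> V" and T: "T \<subseteq> U"
  shows "\<beta> ^ card T * card (colourings (U - T)) \<le> card (colourings U)"
proof -
  have "finite T" using finite_subset[OF subset_trans[OF T U] finite_vertices] .
  then show ?thesis using T
  proof (induction T rule: finite_induct)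
    case (insert x T)
    define U' where "U' = U - insert x T"
    have "card U' < card U"
      unfolding U'_def using insert.prems finite_subset[OF U finite_vertices]
      by (intro psubset_card_mono) auto
    moreover have "U' \<subseteq> V" "x \<in> V - U'" using insert.prems U unfolding U'_def by auto
    ultimately have "\<beta> * card (colourings U') \<le> card (colourings (insert x U'))"
      using grow unfolding grows_below_def by blast
    moreover have "insert x U' = U - T" using insert.prems insert.hyps unfolding U'_def by auto
    ultimately have "\<beta> * card (colourings U') \<le> card (colourings (U - T))" by simp
    then have "\<beta> ^ card (insert x T) * card (colourings U') \<le> \<beta> ^ card T * card (colourings (U - T))"
      using insert.hyps beta_pos by (simp add: mult.assoc mult_left_mono)
    also have "\<dots> \<le> card (colourings U)" using insert by auto
    finally show ?case unfolding U'_def .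
  qed simp
qed

text \<open>These are proper colourings of insert v U, but not necessarily star-k ones.\<close>
definition extensions :: "'a set \<Rightarrow> 'a \<Rightarrow> ('a \<Rightarrow> nat) set" where
  "extensions U v = {d(v := a) | d a. d \<in> colourings U \<and> a < L \<and> (\<forall>u\<in>U. E v u \<longrightarrow> a \<noteq> d u)}"

lemma card_extensions_ge:
  assumes U: "U \<subseteq> V" and v: "v \<in> V" "v \<notin> U"
  shows "finite (extensions U v) \<and> (L - D) * card (colourings U) \<le> card (extensions U v)"
proof -
  define allowed where "allowed d = {a. a < L \<and> (\<forall>u\<in>U. E v u \<longrightarrow> a \<noteq> d u)}" for d :: "'a \<Rightarrow> nat"
  define g where "g = (\<lambda>(d :: 'a \<Rightarrow> nat, a). d(v := a))"
  have fin_colourings: "finite (colourings U)"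
    using finite_colourings finite_subset[OF U finite_vertices] by blast
  have fin_allowed: "finite (allowed d)" for d unfolding allowed_def by simp
  have card_allowed: "L - D \<le> card (allowed d)" for d
  proof -
    have nbrs: "finite {u. E v u}" "card (d ` {u. E v u}) \<le> D"
      using neighbours_finite_card[OF v(1)] card_image_le[of "{u. E v u}" d] by auto
    have "L - D \<le> card {..<L} - card (d ` {u. E v u})" using nbrs by simp
    also have "\<dots> \<le> card ({..<L} - d ` {u. E v u})" by (rule diff_card_le_card_Diff) (use nbrs in auto)
    also have "\<dots> \<le> card (allowed d)" by (rule card_mono[OF fin_allowed]) (auto simp: allowed_def)
    finally show ?thesis .
  qed
  have "inj_on g (Sigma (colourings U) allowed)"
  proof (rule inj_onI, clarsimp simp: g_def)
    fix d a d' a' assume "d \<in> colourings U" "d' \<in> colourings U" and eq: "d(v := a) = d'(v := a')"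
    then have "d v = d' v" using v(2) unfolding colourings_def by auto
    then show "d = d' \<and> a = a'" using fun_upd_eqD[OF eq] eq by (metis fun_upd_triv fun_upd_upd)
  qed
  moreover have "extensions U v = g ` Sigma (colourings U) allowed"
    unfolding extensions_def allowed_def g_def by auto
  moreover have "(L - D) * card (colourings U) \<le> card (Sigma (colourings U) allowed)"
    using fin_colourings fin_allowed card_allowed
      sum_mono[of "colourings U" "\<lambda>_. L - D" "\<lambda>d. card (allowed d)"]
    by (simp add: mult.commute)
  ultimately show ?thesis using fin_colourings fin_allowed by (simp add: card_image)
qed

lemma colourings_insert_subset_extensions:
  assumes "v \<notin> U"
  shows "colourings (insert v U) \<subseteq> extensions U v"
proof
  fix c assume c: "c \<in> colourings (insert v U)"
  define d where "d x = (if x \<in> U then c x else 0)" for x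
  have "d \<in> colourings U" unfolding d_def by (rule restrict_colouring[OF c]) auto
  moreover have "c = d(v := c v)" using c unfolding d_def colourings_def by auto
  moreover have "c v < L" "\<forall>u\<in>U. E v u \<longrightarrow> c v \<noteq> d u"
    using c unfolding d_def colourings_def star_k_coloring_def proper_coloring_def by auto
  ultimately show "c \<in> extensions U v" unfolding extensions_def by blast
qed

lemma extension_proper:
  assumes "\<phi> \<in> extensions U v"
  shows "proper_coloring (insert v U) E \<phi>"
  unfolding proper_coloring_def
proof (intro ballI impI)
  obtain d a where a: "\<forall>u\<in>U. E v u \<longrightarrow> a \<noteq> d u" and "d \<in> colourings U" and \<phi>: "\<phi> = d(v := a)"
    using assms unfolding extensions_def by blast
  then have d: "proper_coloring U E d" unfolding colourings_def star_k_coloring_def by simp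
  fix x y assume xy: "x \<in> insert v U" "y \<in> insert v U" "E x y"
  then show "\<phi> x \<noteq> \<phi> y"
    using a d edge_sym[OF xy(3)] edge_irrefl[of v]
    unfolding \<phi> proper_coloring_def by (cases "x = v"; cases "y = v") auto
qed

lemma bad_extension_bicoloured_path:
  assumes v: "v \<notin> U" and \<phi>: "\<phi> \<in> extensions U v - colourings (insert v U)"
  obtains p where "is_path (insert v U) E p" "length p = 2 * k" "\<exists>j<k. p ! j = v"
    "card (\<phi> ` set p) \<le> 2"
proof -
  define W where "W = insert v U"
  obtain d a where d: "d \<in> colourings U" and a: "a < L" "\<forall>u\<in>U. E v u \<longrightarrow> a \<noteq> d u"
    and \<phi>_eq: "\<phi> = d(v := a)"
    using \<phi> unfolding extensions_def by blast
  have "proper_coloring W E \<phi>" unfolding W_def using \<phi> by (blast intro: extension_proper)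
  moreover have "\<forall>x\<in>W. \<phi> x < L" "\<forall>x. x \<notin> W \<longrightarrow> \<phi> x = 0"
    using d a unfolding \<phi>_eq W_def colourings_def by auto
  ultimately obtain p where p: "is_path W E p" "length p = 2 * k" "card (\<phi> ` set p) < 3"
    using \<phi> unfolding W_def colourings_def star_k_coloring_def by fastforce
  have "v \<in> set p"
  proof (rule ccontr)
    assume "v \<notin> set p"
    then have "is_path U E p" "\<phi> ` set p = d ` set p"
      using p(1) unfolding is_path_def W_def \<phi>_eq by auto
    then show False using d p(2,3) unfolding colourings_def star_k_coloring_def by auto
  qed
  then obtain j where j: "j < 2 * k" "p ! j = v" using p(2) by (auto simp: in_set_conv_nth)
  show thesis
  proof (cases "j < k")
    case True
    then show ?thesis using that[of p] p j unfolding W_def by auto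
  next
    case False
    then have "rev p ! (2 * k - 1 - j) = v" "2 * k - 1 - j < k" using j p(2) by (auto simp: rev_nth)
    then show ?thesis
      using that[of "rev p"] is_path_rev[OF graph p(1)] p unfolding W_def by auto
  qed
qed

text \<open>Along a 2-coloured path the colours alternate, so a bad extension is determined by
  the path and its restriction to the vertices outside forgotten v p.\<close>
lemma bad_extension_recoloured:
  assumes v: "v \<notin> U" and \<phi>: "\<phi> \<in> extensions U v - colourings (insert v U)"
  obtains p where "is_path (insert v U) E p" "length p = 2 * k" "\<exists>j<k. p ! j = v"
    "\<phi> \<in> recolour_path p (anchor v p) ` colourings (insert v U - forgotten v p)"
proof -
  define W where "W = insert v U"
  obtain p where p: "is_path W E p" "length p = 2 * k" "\<exists>j<k. p ! j = v"
    and two: "card (\<phi> ` set p) \<le> 2"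
    using bad_extension_bicoloured_path[OF v \<phi>] unfolding W_def by blast
  have proper: "proper_coloring W E \<phi>" unfolding W_def using \<phi> by (blast intro: extension_proper)
  obtain d a where d: "d \<in> colourings U" and \<phi>_eq: "\<phi> = d(v := a)"
    using \<phi> unfolding extensions_def by blast
  have distinct: "distinct p" using p(1) unfolding is_path_def by simp
  have "v \<in> set p" using p(3) mem_if_nth_first_half[OF p(2)] by blast
  note anchor = anchor_forgotten[OF distinct p(2) k_ge_2 this]
  define \<psi> where "\<psi> x = (if x \<in> W - forgotten v p then d x else 0)" for x
  have "W - forgotten v p \<subseteq> U" using anchor(3) unfolding W_def by auto
  then have "\<psi> \<in> colourings (W - forgotten v p)" unfolding \<psi>_def by (rule restrict_colouring[OF d])
  moreover have "recolour_path p (anchor v p) \<psi> = \<phi>"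
  proof (rule recolour_two_coloured_path[OF distinct anchor(1,2) _ two])
    show "\<phi> (p ! i) \<noteq> \<phi> (p ! Suc i)" if "Suc i < length p" for i
      by (rule proper_coloring_path_step[OF proper p(1) that])
    show "\<psi> x = \<phi> x" if "x \<notin> set p \<or> x = p ! anchor v p \<or> x = p ! Suc (anchor v p)" for x
    proof -
      have "x \<noteq> v" "x \<notin> forgotten v p"
        using that \<open>v \<in> set p\<close> anchor(3) unfolding forgotten_def by auto
      moreover have "x \<in> set p \<Longrightarrow> x \<in> W" using p(1) unfolding is_path_def by auto
      ultimately show ?thesis using d unfolding \<psi>_def \<phi>_eq W_def colourings_def by auto
    qed
  qed
  ultimately show thesis using that p unfolding W_def by blast
qed

lemma card_colourings_forgotten:
  assumes grow: "grows_below (card U)"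
    and U: "U \<subseteq> V" and v: "v \<notin> U"
    and p: "is_path (insert v U) E p" "length p = 2 * k" "v \<in> set p"
  shows "\<beta> ^ (2 * k - 3) * card (colourings (insert v U - forgotten v p)) \<le> card (colourings U)"
proof -
  define S where "S = forgotten v p - {v}"
  have distinct: "distinct p" using p(1) unfolding is_path_def by simp
  note anchor = anchor_forgotten[OF distinct p(2) k_ge_2 p(3)]
  have "S \<subseteq> U" using p(1) unfolding S_def forgotten_def is_path_def by auto
  moreover have "card S = 2 * k - 3" using anchor(3,4) unfolding S_def by (simp add: card_Diff_singleton)
  moreover have "insert v U - forgotten v p = U - S" using anchor(3) v unfolding S_def by auto
  ultimately show ?thesis using card_colourings_diff_ge[OF grow U] by metis
qed

lemma card_bad_extensions_le:
  assumes grow: "grows_below (card U)"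
    and U: "U \<subseteq> V" and v: "v \<in> V" "v \<notin> U"
  shows "real (card (extensions U v - colourings (insert v U)))
    \<le> real (k * D * (D - 1) ^ (2 * k - 2)) * card (colourings U) / \<beta> ^ (2 * k - 3)"
proof -
  define W where "W = insert v U"
  define m where "m = 2 * k - 3"
  define A where "A = k * D * (D - 1) ^ (2 * k - 2)"
  define N where "N = real (card (colourings U))"
  define P where "P = {p. is_path W E p \<and> length p = 2 * k \<and> (\<exists>j<k. p ! j = v)}"
  define R where "R p = recolour_path p (anchor v p) ` colourings (W - forgotten v p)" for p
  have W: "W \<subseteq> V" using U v unfolding W_def by auto
  then have "finite W" using finite_subset finite_vertices by blast
  then have finite_R: "finite (R p)" for p by (simp add: R_def finite_colourings)
  have card_R: "real (card (R p)) \<le> N / \<beta> ^ m" if "p \<in> P" for p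
  proof -
    obtain j where "length p = 2 * k" "j < k" "p ! j = v" using \<open>p \<in> P\<close> unfolding P_def by blast
    then have "v \<in> set p" by (rule mem_if_nth_first_half)
    then have "\<beta> ^ m * card (colourings (W - forgotten v p)) \<le> N"
      using card_colourings_forgotten[OF grow U v(2)] that unfolding P_def W_def m_def N_def by blast
    moreover have "card (R p) \<le> card (colourings (W - forgotten v p))"
      unfolding R_def by (rule card_image_le) (simp add: finite_colourings \<open>finite W\<close>)
    ultimately have "real (card (R p)) * \<beta> ^ m \<le> N"
      using beta_pos by (smt (verit) mult.commute mult_left_mono of_nat_le_iff zero_le_power)
    then show ?thesis using beta_pos by (simp add: pos_le_divide_eq)
  qed
  have P: "finite P" "card P \<le> A"
    unfolding P_def A_def using paths_through_first_half[OF W v(1)] by simp_all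
  have "extensions U v - colourings W \<subseteq> (\<Union>p\<in>P. R p)"
  proof
    fix \<phi> assume "\<phi> \<in> extensions U v - colourings W"
    then obtain p where "is_path W E p" "length p = 2 * k" "\<exists>j<k. p ! j = v" "\<phi> \<in> R p"
      using bad_extension_recoloured[OF v(2), of \<phi>] unfolding R_def W_def by blast
    then show "\<phi> \<in> (\<Union>p\<in>P. R p)" unfolding P_def by blast
  qed
  then have "card (extensions U v - colourings W) \<le> card (\<Union>p\<in>P. R p)"
    using finite_R P(1) by (intro card_mono) auto
  also have "\<dots> \<le> (\<Sum>p\<in>P. card (R p))" by (rule card_UN_le[OF P(1)])
  finally have "real (card (extensions U v - colourings W)) \<le> (\<Sum>p\<in>P. real (card (R p)))"
    by (simp flip: of_nat_sum)
  also have "\<dots> \<le> real (card P) * (N / \<beta> ^ m)" using card_R sum_bounded_above by metis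
  also have "\<dots> \<le> real A * (N / \<beta> ^ m)"
    using P(2) beta_pos by (intro mult_right_mono) (auto simp: N_def)
  finally show ?thesis unfolding W_def A_def N_def m_def by simp
qed

lemma card_colourings_insert_ge:
  assumes grow: "grows_below (card U)"
    and U: "U \<subseteq> V" and v: "v \<in> V" "v \<notin> U"
  shows "\<beta> * card (colourings U) \<le> card (colourings (insert v U))"
proof -
  define W where "W = insert v U"
  define A where "A = real (k * D * (D - 1) ^ (2 * k - 2)) / \<beta> ^ (2 * k - 3)"
  define N where "N = real (card (colourings U))"
  define bad where "bad = extensions U v - colourings W"
  have few_bad: "real (card bad) \<le> A * N"
    using card_bad_extensions_le[OF grow U v] unfolding bad_def W_def A_def N_def by simp
  have ext: "finite (extensions U v)" "(L - D) * card (colourings U) \<le> card (extensions U v)"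
    using card_extensions_ge[OF U v] by auto
  have "colourings W \<subseteq> extensions U v"
    unfolding W_def by (rule colourings_insert_subset_extensions[OF v(2)])
  then have "card bad + card (colourings W) = card (extensions U v)"
    unfolding bad_def using ext(1) card_Diff_subset[of "colourings W" "extensions U v"] card_mono
    by (metis finite_subset le_add_diff_inverse2)
  then have card_W: "real (card (colourings W)) = real (card (extensions U v)) - real (card bad)"
    by (metis add_diff_cancel_left' of_nat_add)
  have "A \<ge> 0" using beta_pos unfolding A_def by simp
  moreover have budget': "\<beta> \<le> real L - real D - A"
    using budget unfolding A_def by simp
  ultimately have "real (L - D) = real L - real D" using beta_pos by (simp add: of_nat_diff)
  then have "(real L - real D) * N \<le> real (card (extensions U v))"
    using ext(2) unfolding N_def by (metis of_nat_le_iff of_nat_mult)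
  moreover have "\<beta> * N \<le> (real L - real D - A) * N"
    using budget' by (intro mult_right_mono) (auto simp: N_def)
  ultimately show ?thesis
    using few_bad card_W unfolding W_def N_def by (simp add: algebra_simps)
qed

lemma card_colourings_grow: "grows_below n"
proof (induction n rule: less_induct)
  case (less n)
  show ?case unfolding grows_below_def
  proof (intro allI impI)
    fix U w assume "U \<subseteq> V" "card U < n" "w \<in> V - U"
    moreover have "grows_below (card U)" using less \<open>card U < n\<close> by blast
    ultimately show "\<beta> * card (colourings U) \<le> card (colourings (insert w U))"
      using card_colourings_insert_ge by blast
  qed
qed

lemma exists_colouring: "colourings V \<noteq> {}"
proof -
  have "\<beta> ^ card V * card (colourings (V - V)) \<le> card (colourings V)"
    by (rule card_colourings_diff_ge[OF card_colourings_grow]) simp_all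
  then have "\<beta> ^ card V \<le> real (card (colourings V))" using card_colourings_empty by simp
  then have "0 < real (card (colourings V))" using zero_less_power[OF beta_pos, of "card V"] by linarith
  then show ?thesis by auto
qed

end

theorem theorem10:
  fixes V :: "'a set" and E :: "'a \<Rightarrow> 'a \<Rightarrow> bool" and k :: nat
  assumes "k \<ge> 2"
    and "finite_simple_graph V E"
    and "V \<noteq> {}"
    and "max_degree V E \<ge> 1"
  shows "\<exists>c :: 'a \<Rightarrow> nat. star_k_coloring k V E c \<and>
           real (card (c ` V)) \<le>
             C_const (2 * k - 2) * real k powr (1 / real (2 * k - 2))
               * real (max_degree V E) powr (real (2 * k - 1) / real (2 * k - 2))
             + real (max_degree V E)"
proof -
  define D where "D = max_degree V E"
  have k: "k \<ge> 2" and D: "D \<ge> 1" using assms(1,4) unfolding D_def by auto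
  have "finite V" using assms(2) unfolding finite_simple_graph_def by simp
  then interpret degree_bounded_graph V E D
    using assms(2) by unfold_locales (simp_all add: D_def max_degree_def)
  obtain \<beta> where \<beta>: "\<beta> > 0"
    "\<beta> + real (k * D * (D - 1) ^ (2 * k - 2)) / \<beta> ^ (2 * k - 3) \<le> of_int \<lfloor>star_bound k D\<rfloor>"
    using exists_beta_below_star_bound[OF k D] by blast
  define L where "L = D + nat \<lfloor>star_bound k D\<rfloor>"
  have L: "real L = real D + of_int \<lfloor>star_bound k D\<rfloor>"
    using star_bound_ge_degree[OF k D] unfolding L_def by simp
  interpret star_colouring_count V E D k L \<beta>
    using k \<beta> L by unfold_locales auto
  obtain c where c: "c \<in> colourings V" using exists_colouring by blast
  then have "card (c ` V) \<le> L" using card_mono[of "{..<L}" "c ` V"] unfolding colourings_def by auto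
  then have "real (card (c ` V)) \<le> star_bound k D + real D" using L by linarith
  then show ?thesis using c unfolding colourings_def star_bound_def D_def by auto
qed

end
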